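(* Let $G$ be a (simple) graph on $n$ vertices, let $p\in(0,1)$, and let $a\ge 1$ be an integer. Then \[|t_{K_{2,a}}(f_{p,G})|\le 2\nu_{p,G}^a+2n^{-2/3}.\]
   Context: For a finite set $V$, $\Omega_V$ is $V$ with the uniform probability measure. For a graph $G$, $W_G\colon\Omega_{V(G)}^2\to[0,1]$ is $W_G(x,y)=1$ if $xy\in E(G)$ and $0$ otherwise (in particular $W_G(x,x)=0$). For $p\in(0,1)$, $f_{p,G}(x,y)=W_G(x,y)-p$, and \[\nu_{p,G}=\max_{x\neq y\in V(G)}\max\big(0,\ \mathbb{E}_z f_{p,G}(x,z)f_{p,G}(z,y)\big),\] with $z$ uniform on $V(G)$. For a graph $H$ and bounded symmetric $W$ on a probability space $\Omega$, $t_H(W)=\int_{\Omega^{V(H)}}\prod_{v_1v_2\in E(H)}W(x_{v_1},x_{v_2})\,d\mathbf{x}$ (product measure); $K_{2,a}$ is the complete bipartite graph with parts of sizes $2$ and $a$, so $t_{K_{2,a}}(f)=\mathbb{E}_{x,y}\big(\mathbb{E}_zf(x,z)f(z,y)\big)^a$. *)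

theory Defs
  imports Complex_Main
begin

definition simple_graph :: "'a set \<Rightarrow> ('a \<Rightarrow> 'a \<Rightarrow> bool) \<Rightarrow> bool" where
  "simple_graph V E \<longleftrightarrow> finite V \<and> V \<noteq> {} \<and>
     (\<forall>x y. E x y \<longrightarrow> x \<in> V \<and> y \<in> V) \<and>
     (\<forall>x y. E x y \<longrightarrow> E y x) \<and> (\<forall>x. \<not> E x x)"

definition WG :: "('a \<Rightarrow> 'a \<Rightarrow> bool) \<Rightarrow> 'a \<Rightarrow> 'a \<Rightarrow> real" where
  "WG E x y = (if E x y then 1 else 0)"

definition fpG :: "real \<Rightarrow> ('a \<Rightarrow> 'a \<Rightarrow> bool) \<Rightarrow> 'a \<Rightarrow> 'a \<Rightarrow> real" where
  "fpG p E x y = WG E x y - p"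

definition codeg :: "'a set \<Rightarrow> real \<Rightarrow> ('a \<Rightarrow> 'a \<Rightarrow> bool) \<Rightarrow> 'a \<Rightarrow> 'a \<Rightarrow> real" where
  "codeg V p E x y = (\<Sum>z\<in>V. fpG p E x z * fpG p E z y) / real (card V)"

definition nu :: "'a set \<Rightarrow> real \<Rightarrow> ('a \<Rightarrow> 'a \<Rightarrow> bool) \<Rightarrow> real" where
  "nu V p E = Max (insert 0 {codeg V p E x y | x y. x \<in> V \<and> y \<in> V \<and> x \<noteq> y})"

definition tK2a :: "'a set \<Rightarrow> real \<Rightarrow> ('a \<Rightarrow> 'a \<Rightarrow> bool) \<Rightarrow> nat \<Rightarrow> real" where
  "tK2a V p E a = (\<Sum>x\<in>V. \<Sum>y\<in>V. (codeg V p E x y) ^ a) / (real (card V))^2"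

end

theory Submission
  imports Defs
begin

text \<open>The codegree kernel C(x,y) = E_z f(x,z) f(z,y) is a Gram kernel, so by Schur's product
  theorem every sum of its entrywise powers C(x,y)^m over all pairs is nonnegative; its diagonal
  lies in [0,1] and its off-diagonal entries are at most \<open>\<nu>\<close>. For odd a, negative entries only
  decrease the sum, which is therefore at most n + n^2 \<open>\<nu>\<close>^a. For even a, one adds the
  nonnegative quantity \<open>\<kappa>\<close> times the sum of the C(x,y)^(a+1), where \<open>\<kappa>\<close> = a/((a+1)\<open>\<tau>\<close>) and
  \<open>\<tau>\<close> = max \<open>\<nu>\<close> n^(-1/3): on a negative entry Young's inequality bounds
  |c|^a - \<open>\<kappa>\<close>|c|^(a+1) by \<open>\<tau>\<close>^a/(a+1), on an entry 0 \<le> c \<le> \<open>\<nu>\<close> the added term is at most c^a,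
  and the diagonal contributes n(1+\<open>\<kappa>\<close>) \<le> n + n^(4/3).\<close>

lemma AM_GM_power:
  fixes u :: real
  assumes "0 \<le> u"
  shows "real (Suc a) * u ^ a \<le> real a * u ^ Suc a + 1"
proof (induction a)
  case 0
  show ?case by simp
next
  case (Suc a)
  have "u * (real (Suc a) * u ^ a) \<le> u * (real a * u ^ Suc a + 1)"
    using Suc.IH assms by (rule mult_left_mono)
  moreover have "0 \<le> (u - 1) * (u ^ Suc a - 1)"
  proof (cases "u \<le> 1")
    case True
    then have "u ^ Suc a \<le> 1" using assms by (intro power_le_one)
    with True show ?thesis by (simp add: mult_nonpos_nonpos)
  next
    case False
    then have "1 \<le> u ^ Suc a" by (intro one_le_power) simp
    with False show ?thesis by simp
  qed
  ultimately show ?case by (simp add: algebra_simps)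
qed

lemma Young_power:
  fixes s t :: real
  assumes "0 \<le> s" and "0 < t"
  shows "s ^ a \<le> real a / real (Suc a) * s ^ Suc a / t + t ^ a / real (Suc a)"
proof -
  have "real (Suc a) * (s / t) ^ a \<le> real a * (s / t) ^ Suc a + 1"
    using assms by (intro AM_GM_power) simp
  then have "t ^ a * (real (Suc a) * (s / t) ^ a) \<le> t ^ a * (real a * (s / t) ^ Suc a + 1)"
    using assms by (simp add: mult_left_mono)
  moreover have "t ^ a * (s / t) ^ a = s ^ a" and "t ^ a * (s / t) ^ Suc a = s ^ Suc a / t"
    using assms by (simp_all add: power_divide)
  ultimately have "real (Suc a) * s ^ a \<le> real a * s ^ Suc a / t + t ^ a"
    by (simp add: algebra_simps)
  then have "s ^ a \<le> (real a * s ^ Suc a / t + t ^ a) / real (Suc a)"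
    by (simp add: le_divide_eq mult.commute)
  then show ?thesis by (simp add: add_divide_distrib mult.commute)
qed

lemma gram_hadamard_power_quadratic_form_nonneg:
  fixes g :: "'a \<Rightarrow> 'b \<Rightarrow> real" and w :: "'a \<Rightarrow> real" and k :: real
  assumes "0 \<le> k"
  shows "0 \<le> (\<Sum>x\<in>V. \<Sum>y\<in>V. w x * w y * ((\<Sum>z\<in>Z. g x z * g y z) / k) ^ m)"
proof (induction m arbitrary: w)
  case 0
  have "(\<Sum>x\<in>V. \<Sum>y\<in>V. w x * w y) = sum w V * sum w V"
    by (simp add: sum_product)
  then show ?case by simp
next
  case (Suc m)
  define c where "c x y = (\<Sum>z\<in>Z. g x z * g y z) / k" for x y
  \<comment> \<open>Schur's product theorem: one factor of the Gram kernel is absorbed into the weights.\<close>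
  have "w x * w y * c x y ^ Suc m
      = (\<Sum>z\<in>Z. (w x * g x z) * (w y * g y z) * c x y ^ m) / k" for x y
  proof -
    have "w x * w y * c x y ^ Suc m = (w x * w y * c x y ^ m) * (\<Sum>z\<in>Z. g x z * g y z) / k"
      by (simp add: c_def algebra_simps)
    also have "\<dots> = (\<Sum>z\<in>Z. (w x * w y * c x y ^ m) * (g x z * g y z)) / k"
      by (simp add: sum_distrib_left)
    finally show ?thesis by (simp add: algebra_simps)
  qed
  then have "(\<Sum>x\<in>V. \<Sum>y\<in>V. w x * w y * c x y ^ Suc m)
      = (\<Sum>x\<in>V. \<Sum>y\<in>V. \<Sum>z\<in>Z. (w x * g x z) * (w y * g y z) * c x y ^ m) / k"
    by (simp only: sum_divide_distrib)
  also have "\<dots> = (\<Sum>z\<in>Z. \<Sum>x\<in>V. \<Sum>y\<in>V. (w x * g x z) * (w y * g y z) * c x y ^ m) / k"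
    by (simp add: sum.swap[where B = Z] sum.swap[where A = V and B = Z])
  also have "0 \<le> \<dots>"
  proof -
    have "0 \<le> (\<Sum>x\<in>V. \<Sum>y\<in>V. (w x * g x z) * (w y * g y z) * c x y ^ m)" for z
      using Suc.IH[of "\<lambda>x. w x * g x z"] by (simp add: c_def)
    then show ?thesis using assms by (simp add: sum_nonneg)
  qed
  finally show ?case by (simp add: c_def)
qed

corollary gram_hadamard_power_sum_nonneg:
  fixes g :: "'a \<Rightarrow> 'b \<Rightarrow> real" and k :: real
  assumes "0 \<le> k"
  shows "0 \<le> (\<Sum>x\<in>V. \<Sum>y\<in>V. ((\<Sum>z\<in>Z. g x z * g y z) / k) ^ m)"
  using gram_hadamard_power_quadratic_form_nonneg[OF assms, where w = "\<lambda>_. 1"] by simp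

lemma double_sum_le_diagonal_offdiagonal:
  fixes f :: "'a \<Rightarrow> 'a \<Rightarrow> real"
  assumes "finite V"
    and "\<And>x. x \<in> V \<Longrightarrow> f x x \<le> A"
    and "\<And>x y. x \<in> V \<Longrightarrow> y \<in> V \<Longrightarrow> x \<noteq> y \<Longrightarrow> f x y \<le> B"
    and "0 \<le> B"
  shows "(\<Sum>x\<in>V. \<Sum>y\<in>V. f x y) \<le> real (card V) * A + real (card V) ^ 2 * B"
proof -
  have "(\<Sum>x\<in>V. \<Sum>y\<in>V. f x y) \<le> (\<Sum>x\<in>V. \<Sum>y\<in>V. (if x = y then A else 0) + B)"
    using assms by (intro sum_mono) fastforce
  also have "\<dots> = real (card V) * A + real (card V) ^ 2 * B"
    using assms(1) by (simp add: sum.distrib power2_eq_square algebra_simps)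
  finally show ?thesis .
qed

lemma even_power_plus_next_power_le:
  fixes c \<nu> \<tau> :: real
  assumes "even a" and "c \<le> \<nu>" and "0 \<le> \<nu>" and "\<nu> \<le> \<tau>" and "0 < \<tau>"
  shows "c ^ a + real a / (real (Suc a) * \<tau>) * c ^ Suc a \<le> max (2 * \<nu> ^ a) (\<tau> ^ a / real (Suc a))"
proof (cases "0 \<le> c")
  case True
  have "c ^ a \<le> \<nu> ^ a" using True assms by (intro power_mono)
  have "c ^ Suc a \<le> \<tau> * c ^ a" using True assms by (simp add: mult_right_mono)
  then have "real a / (real (Suc a) * \<tau>) * c ^ Suc a
      \<le> real a / (real (Suc a) * \<tau>) * (\<tau> * c ^ a)"
    using assms(5) by (intro mult_left_mono) simp_all
  also have "\<dots> = real a / real (Suc a) * c ^ a" using assms(5) by simp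
  also have "\<dots> \<le> c ^ a" using True by (intro mult_left_le_one_le) simp_all
  finally show ?thesis using \<open>c ^ a \<le> \<nu> ^ a\<close> by simp
next
  case False
  define s where "s = - c"
  have "0 \<le> s" using False by (simp add: s_def)
  have "c ^ a = s ^ a"
    using assms(1) by (simp add: s_def)
  moreover have "real a / (real (Suc a) * \<tau>) * c ^ Suc a = - (real a / real (Suc a) * s ^ Suc a / \<tau>)"
    using assms(1) by (simp add: s_def)
  moreover have "s ^ a \<le> real a / real (Suc a) * s ^ Suc a / \<tau> + \<tau> ^ a / real (Suc a)"
    using \<open>0 \<le> s\<close> assms(5) by (rule Young_power)
  ultimately have "c ^ a + real a / (real (Suc a) * \<tau>) * c ^ Suc a \<le> \<tau> ^ a / real (Suc a)"
    by linarith
  then show ?thesis by linarith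
qed

lemma odd_power_sum_le:
  fixes C :: "'a \<Rightarrow> 'a \<Rightarrow> real"
  assumes "finite V" and "odd a"
    and diag: "\<And>x. x \<in> V \<Longrightarrow> 0 \<le> C x x \<and> C x x \<le> 1"
    and offdiag: "\<And>x y. x \<in> V \<Longrightarrow> y \<in> V \<Longrightarrow> x \<noteq> y \<Longrightarrow> C x y \<le> \<nu>"
    and "0 \<le> \<nu>"
  shows "(\<Sum>x\<in>V. \<Sum>y\<in>V. C x y ^ a) \<le> real (card V) + real (card V) ^ 2 * \<nu> ^ a"
  using double_sum_le_diagonal_offdiagonal[of V "\<lambda>x y. C x y ^ a" 1 "\<nu> ^ a"] assms
  by (simp add: power_le_one power_mono_odd)

lemma even_power_sum_le:
  fixes C :: "'a \<Rightarrow> 'a \<Rightarrow> real"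
  assumes "finite V" and "even a"
    and diag: "\<And>x. x \<in> V \<Longrightarrow> 0 \<le> C x x \<and> C x x \<le> 1"
    and offdiag: "\<And>x y. x \<in> V \<Longrightarrow> y \<in> V \<Longrightarrow> x \<noteq> y \<Longrightarrow> C x y \<le> \<nu>"
    and "0 \<le> \<nu>"
    and next_power_sum: "0 \<le> (\<Sum>x\<in>V. \<Sum>y\<in>V. C x y ^ Suc a)"
    and "\<nu> \<le> \<tau>" and "0 < \<tau>"
  shows "(\<Sum>x\<in>V. \<Sum>y\<in>V. C x y ^ a)
    \<le> real (card V) * (1 + real a / (real (Suc a) * \<tau>))
       + real (card V) ^ 2 * max (2 * \<nu> ^ a) (\<tau> ^ a / real (Suc a))"
proof -
  define \<kappa> where "\<kappa> = real a / (real (Suc a) * \<tau>)"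
  have "0 \<le> \<kappa>" using \<open>0 < \<tau>\<close> by (simp add: \<kappa>_def)
  have "(\<Sum>x\<in>V. \<Sum>y\<in>V. C x y ^ a)
      \<le> (\<Sum>x\<in>V. \<Sum>y\<in>V. C x y ^ a) + \<kappa> * (\<Sum>x\<in>V. \<Sum>y\<in>V. C x y ^ Suc a)"
    using \<open>0 \<le> \<kappa>\<close> next_power_sum by simp
  also have "\<dots> = (\<Sum>x\<in>V. \<Sum>y\<in>V. C x y ^ a + \<kappa> * C x y ^ Suc a)"
    by (simp add: sum.distrib sum_distrib_left)
  also have "\<dots> \<le> real (card V) * (1 + \<kappa>)
       + real (card V) ^ 2 * max (2 * \<nu> ^ a) (\<tau> ^ a / real (Suc a))"
  proof (rule double_sum_le_diagonal_offdiagonal)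
    show "C x x ^ a + \<kappa> * C x x ^ Suc a \<le> 1 + \<kappa>" if "x \<in> V" for x
      using diag[OF that] \<open>0 \<le> \<kappa>\<close>
      by (intro add_mono power_le_one mult_left_le) auto
    show "C x y ^ a + \<kappa> * C x y ^ Suc a \<le> max (2 * \<nu> ^ a) (\<tau> ^ a / real (Suc a))"
      if "x \<in> V" "y \<in> V" "x \<noteq> y" for x y
      unfolding \<kappa>_def using assms offdiag[OF that] by (intro even_power_plus_next_power_le)
  qed (use assms in \<open>auto simp: le_max_iff_disj\<close>)
  finally show ?thesis by (simp add: \<kappa>_def)
qed

lemma inverse_le_powr:
  fixes n e :: real
  assumes "1 \<le> n" and "-1 \<le> e"
  shows "1 / n \<le> n powr e"
proof -
  have "n powr (-1) \<le> n powr e" using assms by (intro powr_mono) auto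
  then show ?thesis using assms by (simp add: powr_minus_divide)
qed

lemma max_power_div_Suc_le:
  fixes \<nu> r :: real
  assumes "0 \<le> \<nu>" and "2 \<le> a" and "0 < r" and "r \<le> 1"
  shows "max (2 * \<nu> ^ a) (max \<nu> r ^ a / real (Suc a)) \<le> 2 * \<nu> ^ a + r ^ 2 / real (Suc a)"
proof -
  have "0 \<le> \<nu> ^ a" using assms(1) by simp
  moreover have "r ^ a \<le> r ^ 2" using assms by (intro power_decreasing) auto
  ultimately have "max \<nu> r ^ a \<le> \<nu> ^ a + r ^ 2" using assms(3) by (auto simp: max_def)
  then have "max \<nu> r ^ a / real (Suc a) \<le> \<nu> ^ a / real (Suc a) + r ^ 2 / real (Suc a)"
    by (simp add: divide_right_mono flip: add_divide_distrib)
  moreover have "\<nu> ^ a / real (Suc a) \<le> \<nu> ^ a / 1" using assms(1) by (intro divide_left_mono) auto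
  ultimately show ?thesis using \<open>0 \<le> \<nu> ^ a\<close> assms(3) by simp
qed

lemma even_power_average_bound:
  fixes n \<nu> :: real
  assumes "1 \<le> n" and "0 \<le> \<nu>" and "2 \<le> a"
  defines "\<tau> \<equiv> max \<nu> (n powr (-1/3))"
  shows "(n * (1 + real a / (real (Suc a) * \<tau>)) + n ^ 2 * max (2 * \<nu> ^ a) (\<tau> ^ a / real (Suc a))) / n ^ 2
    \<le> 2 * \<nu> ^ a + 2 * n powr (-2/3)"
proof -
  define r where "r = n powr (-1/3)"
  have "0 < r" using assms(1) by (simp add: r_def)
  have "r \<le> n powr 0" unfolding r_def using assms(1) by (intro powr_mono) auto
  then have "r \<le> 1" using assms(1) by simp
  have "r \<le> \<tau>" by (simp add: \<tau>_def r_def)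
  then have "0 < \<tau>" using \<open>0 < r\<close> by linarith
  have r_sq: "r ^ 2 = n powr (-2/3)"
    using assms(1) by (simp add: r_def powr_power)
  have max_le: "max (2 * \<nu> ^ a) (\<tau> ^ a / real (Suc a)) \<le> 2 * \<nu> ^ a + r ^ 2 / real (Suc a)"
    unfolding \<tau>_def r_def[symmetric] using assms(2,3) \<open>0 < r\<close> \<open>r \<le> 1\<close> by (rule max_power_div_Suc_le)
  have "1 / (n * \<tau>) \<le> r ^ 2"
  proof -
    have "1 / (n * \<tau>) \<le> 1 / (n * r)"
      using assms(1) \<open>0 < r\<close> \<open>r \<le> \<tau>\<close> by (intro divide_left_mono mult_left_mono) auto
    also have "n * r = n powr (2/3)"
      using assms(1) by (simp add: r_def powr_mult_base)
    finally show ?thesis using assms(1) r_sq by (simp add: powr_minus_divide)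
  qed
  have "(n * (1 + real a / (real (Suc a) * \<tau>)) + n ^ 2 * max (2 * \<nu> ^ a) (\<tau> ^ a / real (Suc a))) / n ^ 2
      = 1 / n + real a / real (Suc a) * (1 / (n * \<tau>)) + max (2 * \<nu> ^ a) (\<tau> ^ a / real (Suc a))"
    using assms(1) \<open>0 < \<tau>\<close> by (simp add: divide_simps power2_eq_square) (simp add: algebra_simps)
  also have "\<dots> \<le> r ^ 2 + real a / real (Suc a) * r ^ 2 + (2 * \<nu> ^ a + r ^ 2 / real (Suc a))"
    using inverse_le_powr[OF assms(1), of "-2/3"] r_sq \<open>1 / (n * \<tau>) \<le> r ^ 2\<close> max_le
    by (intro add_mono mult_left_mono) auto
  also have "\<dots> = 2 * \<nu> ^ a + 2 * r ^ 2"
    by (simp add: divide_simps) (simp add: algebra_simps)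
  finally show ?thesis using r_sq by simp
qed

lemma power_sum_average_le:
  fixes C :: "'a \<Rightarrow> 'a \<Rightarrow> real"
  assumes "finite V" and "V \<noteq> {}" and "1 \<le> a"
    and diag: "\<And>x. x \<in> V \<Longrightarrow> 0 \<le> C x x \<and> C x x \<le> 1"
    and offdiag: "\<And>x y. x \<in> V \<Longrightarrow> y \<in> V \<Longrightarrow> x \<noteq> y \<Longrightarrow> C x y \<le> \<nu>"
    and "0 \<le> \<nu>"
    and next_power_sum: "0 \<le> (\<Sum>x\<in>V. \<Sum>y\<in>V. C x y ^ Suc a)"
  shows "(\<Sum>x\<in>V. \<Sum>y\<in>V. C x y ^ a) / real (card V) ^ 2 \<le> 2 * \<nu> ^ a + 2 * real (card V) powr (-2/3)"
proof -
  define n where "n = real (card V)"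
  have "1 \<le> n" using assms(1,2) by (simp add: n_def Suc_le_eq card_gt_0_iff)
  show ?thesis
  proof (cases "odd a")
    case True
    have "(\<Sum>x\<in>V. \<Sum>y\<in>V. C x y ^ a) \<le> n + n ^ 2 * \<nu> ^ a"
      unfolding n_def by (rule odd_power_sum_le) (use assms True in auto)
    then have "(\<Sum>x\<in>V. \<Sum>y\<in>V. C x y ^ a) / n ^ 2 \<le> (n + n ^ 2 * \<nu> ^ a) / n ^ 2"
      by (simp add: divide_right_mono)
    also have "\<dots> = 1 / n + \<nu> ^ a"
      using \<open>1 \<le> n\<close> by (simp add: field_simps power2_eq_square)
    also have "\<dots> \<le> 2 * \<nu> ^ a + 2 * n powr (-2/3)"
      using inverse_le_powr[OF \<open>1 \<le> n\<close>, of "-2/3"] zero_le_power[OF \<open>0 \<le> \<nu>\<close>, of a]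
        powr_ge_zero[of n "-2/3"] by linarith
    finally show ?thesis by (simp add: n_def)
  next
    case False
    define \<tau> where "\<tau> = max \<nu> (n powr (-1/3))"
    have "0 < \<tau>" using \<open>1 \<le> n\<close> by (simp add: \<tau>_def less_max_iff_disj)
    have "(\<Sum>x\<in>V. \<Sum>y\<in>V. C x y ^ a)
        \<le> n * (1 + real a / (real (Suc a) * \<tau>)) + n ^ 2 * max (2 * \<nu> ^ a) (\<tau> ^ a / real (Suc a))"
      unfolding n_def
      by (rule even_power_sum_le) (use assms False \<open>0 < \<tau>\<close> in \<open>auto simp: \<tau>_def\<close>)
    then have "(\<Sum>x\<in>V. \<Sum>y\<in>V. C x y ^ a) / n ^ 2
        \<le> (n * (1 + real a / (real (Suc a) * \<tau>)) + n ^ 2 * max (2 * \<nu> ^ a) (\<tau> ^ a / real (Suc a))) / n ^ 2"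
      by (simp add: divide_right_mono)
    also have "\<dots> \<le> 2 * \<nu> ^ a + 2 * n powr (-2/3)"
      unfolding \<tau>_def using \<open>1 \<le> n\<close> \<open>0 \<le> \<nu>\<close> \<open>1 \<le> a\<close> False
      by (intro even_power_average_bound) presburger+
    finally show ?thesis by (simp add: n_def)
  qed
qed

lemma codeg_eq_gram:
  assumes "symp E"
  shows "codeg V p E x y = (\<Sum>z\<in>V. fpG p E x z * fpG p E y z) / real (card V)"
proof -
  have "fpG p E z y = fpG p E y z" for z
    using assms by (auto simp: fpG_def WG_def dest: sympD)
  then show ?thesis by (simp add: codeg_def)
qed

lemma abs_fpG_le_one:
  assumes "0 \<le> p" and "p \<le> 1"
  shows "\<bar>fpG p E x y\<bar> \<le> 1"
  using assms by (simp add: fpG_def WG_def)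

lemma codeg_diag_nonneg:
  assumes "symp E"
  shows "0 \<le> codeg V p E x x"
  unfolding codeg_eq_gram[OF assms] by (intro divide_nonneg_nonneg sum_nonneg) auto

lemma codeg_le_one:
  assumes "0 \<le> p" and "p \<le> 1"
  shows "codeg V p E x y \<le> 1"
proof -
  have "fpG p E x z * fpG p E z y \<le> 1" for z
  proof -
    have "\<bar>fpG p E x z * fpG p E z y\<bar> \<le> 1"
      using abs_fpG_le_one[OF assms, of E x z] abs_fpG_le_one[OF assms, of E z y]
      by (simp add: abs_mult mult_le_one)
    then show ?thesis by (simp add: abs_le_iff)
  qed
  then have "(\<Sum>z\<in>V. fpG p E x z * fpG p E z y) \<le> (\<Sum>z\<in>V. 1)"
    by (intro sum_mono) simp
  then show ?thesis unfolding codeg_def by (simp add: divide_le_eq)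
qed

lemma codeg_power_sum_nonneg:
  assumes "symp E"
  shows "0 \<le> (\<Sum>x\<in>V. \<Sum>y\<in>V. codeg V p E x y ^ m)"
  unfolding codeg_eq_gram[OF assms] by (rule gram_hadamard_power_sum_nonneg) simp

lemma finite_offdiagonal_codegs:
  assumes "finite V"
  shows "finite {codeg V p E x y | x y. x \<in> V \<and> y \<in> V \<and> x \<noteq> y}"
proof (rule finite_subset)
  show "{codeg V p E x y | x y. x \<in> V \<and> y \<in> V \<and> x \<noteq> y} \<subseteq> (\<lambda>(x, y). codeg V p E x y) ` (V \<times> V)"
    by auto
qed (use assms in simp)

lemma codeg_le_nu:
  assumes "finite V" and "x \<in> V" and "y \<in> V" and "x \<noteq> y"
  shows "codeg V p E x y \<le> nu V p E"
  unfolding nu_def using assms finite_offdiagonal_codegs[OF assms(1)] by (intro Max_ge) auto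

lemma nu_nonneg:
  assumes "finite V"
  shows "0 \<le> nu V p E"
  unfolding nu_def using finite_offdiagonal_codegs[OF assms] by (intro Max_ge) auto

theorem proposition3p6:
  fixes V :: "'a set" and E :: "'a \<Rightarrow> 'a \<Rightarrow> bool" and p :: real and a :: nat
  assumes "simple_graph V E" and "0 < p" and "p < 1" and "1 \<le> a"
  shows "\<bar>tK2a V p E a\<bar> \<le> 2 * (nu V p E) ^ a + 2 * real (card V) powr (-2/3)"
proof -
  have fin: "finite V" and ne: "V \<noteq> {}" and sym: "symp E"
    using assms(1) unfolding simple_graph_def by (auto intro: sympI)
  have "\<bar>tK2a V p E a\<bar> = tK2a V p E a"
    using codeg_power_sum_nonneg[OF sym] by (simp add: tK2a_def)
  also have "\<dots> \<le> 2 * (nu V p E) ^ a + 2 * real (card V) powr (-2/3)"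
    unfolding tK2a_def using assms(2,3)
    by (intro power_sum_average_le fin ne assms(4) codeg_diag_nonneg codeg_le_one codeg_le_nu
        nu_nonneg codeg_power_sum_nonneg conjI sym) auto
  finally show ?thesis .
qed

end
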